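(* Let $1\le k\le n$, $x=(x',x'')\in\mathbb{R}^k\times\mathbb{R}^{n-k}$, $1<p<\infty$, $\alpha\in\mathbb{R}$. Then for all complex-valued $f\in C_0^\infty(\mathbb{R}^n\setminus\{x'=0\})$, $$\left|\frac{k-\alpha}{p}\right|^p\left\|\frac{f}{|x'|_k^{\alpha/p}}\right\|_{L^p(\mathbb{R}^n)}^p\le\left\|\frac{|\nabla f|}{|x'|_k^{\alpha/p-1}}\right\|_{L^p(\mathbb{R}^n)}^p-\int_{\mathbb{R}^n}C_p\!\left(\frac{x'\cdot\nabla_k f}{|x'|_k^{\alpha/p}},\;\frac{x'\cdot\nabla_k f}{|x'|_k^{\alpha/p}}+\frac{k-\alpha}{p}\frac{f}{|x'|_k^{\alpha/p}}\right)dx,$$ where $\nabla$ is the full gradient on $\mathbb{R}^n$.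
   Context: $|\cdot|_k$ denotes the Euclidean norm on $\mathbb{R}^k$, $\nabla_k=(\partial_{x_1},\dots,\partial_{x_k})$, $x'\cdot\nabla_k f=\sum_{j=1}^k x_j\partial_{x_j}f$, and $|\nabla f|$ is the Euclidean length of the (complex) full gradient. For complex numbers $\xi,\eta$ and $1<p<\infty$, $C_p(\xi,\eta):=|\xi|^p-|\xi-\eta|^p-p|\xi-\eta|^{p-2}\operatorname{Re}((\xi-\eta)\overline{\eta})$, with the last term interpreted as $0$ when $\xi=\eta$. *)

theory Defs
  imports "HOL-Analysis.Analysis"
begin

definition pdiff :: "'n::finite \<Rightarrow> (real^'n \<Rightarrow> complex) \<Rightarrow> real^'n \<Rightarrow> complex" where
  "pdiff i g x = vector_derivative (\<lambda>t. g (x + t *\<^sub>R axis i 1)) (at 0)"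

fun pderivs :: "'n::finite list \<Rightarrow> (real^'n \<Rightarrow> complex) \<Rightarrow> real^'n \<Rightarrow> complex" where
  "pderivs [] g = g"
| "pderivs (i # is) g = pdiff i (pderivs is g)"

definition smooth_fun :: "(real^'n::finite \<Rightarrow> complex) \<Rightarrow> bool" where
  "smooth_fun g \<longleftrightarrow> (\<forall>is. continuous_on UNIV (pderivs is g) \<and>
      (\<forall>i x. ((\<lambda>t. pderivs is g (x + t *\<^sub>R axis i 1)) has_vector_derivative
                 pderivs (i # is) g x) (at 0)))"

(* Euclidean norm of the partial vector x' = (x_i)_{i in K} *)
definition normK :: "'n::finite set \<Rightarrow> real^'n \<Rightarrow> real" where
  "normK K x = sqrt (\<Sum>i\<in>K. (x $ i)\<^sup>2)"

definition grad_norm :: "(real^'n::finite \<Rightarrow> complex) \<Rightarrow> real^'n \<Rightarrow> real" where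
  "grad_norm g x = sqrt (\<Sum>i\<in>UNIV. (cmod (pdiff i g x))\<^sup>2)"

definition radial_deriv :: "'n::finite set \<Rightarrow> (real^'n \<Rightarrow> complex) \<Rightarrow> real^'n \<Rightarrow> complex" where
  "radial_deriv K g x = (\<Sum>i\<in>K. of_real (x $ i) * pdiff i g x)"

definition Cp :: "real \<Rightarrow> complex \<Rightarrow> complex \<Rightarrow> real" where
  "Cp p \<xi> \<eta> = (if \<xi> = \<eta> then cmod \<xi> powr p
     else cmod \<xi> powr p - cmod (\<xi> - \<eta>) powr p
          - p * cmod (\<xi> - \<eta>) powr (p - 2) * Re ((\<xi> - \<eta>) * cnj \<eta>))"

end

theory Submission
  imports Defs
begin

text \<open>
  Put F = f / |x'|^(\<alpha>/p), \<xi> = (x' . \<nabla>_k f) / |x'|^(\<alpha>/p) and c = (k - \<alpha>)/p. Expanding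
  C_p gives pointwise
    C_p(\<xi>, \<xi> + c F) = |\<xi>|^p + (p - 1) |c|^p |F|^p + p c |c|^(p-2) |F|^(p-2) Re (F conj \<xi>).
  The last term is a divergence in the x' variables,
    \<Sum>_{i \<in> K} \<partial>_i (x_i |x'|^(-\<alpha>) |f|^p) = (k - \<alpha>) |F|^p + p |F|^(p-2) Re (F conj \<xi>),
  and each \<partial>_i-term integrates to zero because f has compact support off {x' = 0}. Hence
    \<integral> C_p(\<xi>, \<xi> + c F) = \<integral> |\<xi>|^p - |c|^p \<integral> |F|^p,
  and the inequality follows from |\<xi>| \<le> |x'|^(1 - \<alpha>/p) |\<nabla>f| (Cauchy-Schwarz).
\<close>

lemma norm_powr_has_real_derivative:
  fixes g :: "real \<Rightarrow> 'a::real_inner"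
  assumes g: "(g has_vector_derivative g') (at t)" and p: "1 < p"
  shows "((\<lambda>s. norm (g s) powr p) has_real_derivative
           p * norm (g t) powr (p - 2) * (g t \<bullet> g')) (at t)"
proof (cases "g t = 0")
  case False
  have g_deriv: "(g has_derivative (\<lambda>h. h *\<^sub>R g')) (at t)"
    using g by (simp add: has_vector_derivative_def)
  have sq: "((\<lambda>s. g s \<bullet> g s) has_real_derivative 2 * (g t \<bullet> g')) (at t)"
    unfolding has_field_derivative_def
    by (rule has_derivative_eq_rhs[OF has_derivative_inner[OF g_deriv g_deriv]]) (auto simp: inner_commute algebra_simps)
  have deriv: "((\<lambda>s. (g s \<bullet> g s) powr (p / 2)) has_real_derivative
          (p / 2) * (g t \<bullet> g t) powr (p / 2 - of_nat 1) * (2 * (g t \<bullet> g'))) (at t)"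
    using False by (intro DERIV_fun_powr[OF sq]) simp
  have inner_powr: "(z \<bullet> z) powr (q / 2) = norm z powr q" for z :: 'a and q
    by (simp add: power2_norm_eq_inner[symmetric] powr_numeral[symmetric] powr_powr del: powr_numeral)
  have "(g t \<bullet> g t) powr (p / 2 - of_nat 1) = norm (g t) powr (p - 2)"
    using inner_powr[of "g t" "p - 2"] by (simp add: diff_divide_distrib)
  with deriv show ?thesis
    unfolding inner_powr by (simp add: algebra_simps)
next
  case True
  have "((\<lambda>y. norm ((g y - g t) - (y - t) *\<^sub>R g') / norm (y - t)) \<longlongrightarrow> 0) (at t)"
    using g by (simp add: has_vector_derivative_def has_derivative_iff_norm)
  then have "\<forall>\<^sub>F y in at t. norm ((g y - g t) - (y - t) *\<^sub>R g') / norm (y - t) < 1"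
    by (rule order_tendstoD) simp
  moreover have "\<forall>\<^sub>F y in at t. y \<noteq> t"
    by (simp add: eventually_at_filter)
  ultimately have small: "\<forall>\<^sub>F y in at t.
      norm (norm (g y) powr p / (y - t)) \<le> (1 + norm g') powr p * \<bar>y - t\<bar> powr (p - 1)"
  proof eventually_elim
    case (elim y)
    then have yt: "\<bar>y - t\<bar> > 0"
      by simp
    have "norm (g y - (y - t) *\<^sub>R g') < \<bar>y - t\<bar>"
      using elim yt True by (simp add: divide_less_eq)
    moreover have "norm (g y) \<le> norm (g y - (y - t) *\<^sub>R g') + \<bar>y - t\<bar> * norm g'"
      using norm_triangle_ineq[of "g y - (y - t) *\<^sub>R g'" "(y - t) *\<^sub>R g'"] by simp
    ultimately have "norm (g y) \<le> \<bar>y - t\<bar> + \<bar>y - t\<bar> * norm g'"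
      by linarith
    then have "norm (g y) \<le> (1 + norm g') * \<bar>y - t\<bar>"
      by (simp add: algebra_simps)
    then have "norm (g y) powr p \<le> ((1 + norm g') * \<bar>y - t\<bar>) powr p"
      using p by (intro powr_mono2) auto
    also have "\<dots> = (1 + norm g') powr p * \<bar>y - t\<bar> powr (p - 1) * \<bar>y - t\<bar>"
      using yt by (simp add: powr_mult powr_diff)
    finally show ?case
      using yt by (simp add: divide_le_eq)
  qed
  have "((\<lambda>y. (1 + norm g') powr p * \<bar>y - t\<bar> powr (p - 1)) \<longlongrightarrow> 0) (at t)"
    using p by (intro tendsto_mult_right_zero tendsto_zero_powrI) (auto intro!: tendsto_eq_intros)
  from Lim_null_comparison[OF small this] show ?thesis
    using True by (simp add: has_field_derivative_iff)
qed

lemma cmod_powr_has_real_derivative: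
  fixes g :: "real \<Rightarrow> complex"
  assumes "(g has_vector_derivative g') (at t)" and "1 < p"
  shows "((\<lambda>s. cmod (g s) powr p) has_real_derivative
           p * cmod (g t) powr (p - 2) * Re (cnj (g t) * g')) (at t)"
  using norm_powr_has_real_derivative[OF assms] by (simp add: inner_complex_def)

lemma power2_mult_abs_powr: "c\<^sup>2 * \<bar>c\<bar> powr (p - 2) = \<bar>c::real\<bar> powr p"
proof (cases "c = 0")
  case False
  then show ?thesis
    using powr_add[of "\<bar>c\<bar>" 2 "p - 2"] by (simp add: powr_numeral)
qed simp

lemma abs_cmod_powr_mult_Re_le:
  "\<bar>cmod z powr (p - 2) * Re (cnj z * w)\<bar> \<le> cmod z powr (p - 1) * cmod w"
proof (cases "z = 0")
  case False
  have "\<bar>Re (cnj z * w)\<bar> \<le> cmod z * cmod w"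
    using abs_Re_le_cmod[of "cnj z * w"] by (simp add: norm_mult)
  then have "\<bar>cmod z powr (p - 2) * Re (cnj z * w)\<bar> \<le> cmod z powr (p - 2) * cmod z * cmod w"
    by (simp add: abs_mult mult_left_mono mult.assoc)
  also have "cmod z powr (p - 2) * cmod z = cmod z powr (p - 1)"
    using powr_add[of "cmod z" "p - 2" 1] False by simp
  finally show ?thesis .
qed simp

lemma Cp_add_scaled:
  assumes "1 < p"
  shows "Cp p \<xi> (\<xi> + of_real c * F) = cmod \<xi> powr p + (p - 1) * \<bar>c\<bar> powr p * cmod F powr p
           + p * c * \<bar>c\<bar> powr (p - 2) * (cmod F powr (p - 2) * Re (F * cnj \<xi>))"
proof (cases "of_real c * F = 0")
  case True
  then show ?thesis
    using assms by (auto simp: Cp_def)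
next
  case False
  have ne: "\<xi> \<noteq> \<xi> + of_real c * F"
    using False by simp
  have diff: "\<xi> - (\<xi> + of_real c * F) = - (of_real c * F)"
    by simp
  have Re_eq: "Re (- (of_real c * F) * cnj (\<xi> + of_real c * F))
                 = - c * Re (F * cnj \<xi>) - c\<^sup>2 * (cmod F)\<^sup>2"
    unfolding cmod_power2 by (simp add: algebra_simps power2_eq_square)
  have "Cp p \<xi> (\<xi> + of_real c * F) = cmod \<xi> powr p - \<bar>c\<bar> powr p * cmod F powr p
      - p * (\<bar>c\<bar> powr (p - 2) * cmod F powr (p - 2)) * (- c * Re (F * cnj \<xi>) - c\<^sup>2 * (cmod F)\<^sup>2)"
    unfolding Cp_def
    by (simp only: ne if_False diff norm_minus_cancel norm_mult norm_of_real Re_eq powr_mult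
        abs_ge_zero norm_ge_zero simp_thms)
  also have "\<dots> = cmod \<xi> powr p - \<bar>c\<bar> powr p * cmod F powr p
      + p * c * \<bar>c\<bar> powr (p - 2) * (cmod F powr (p - 2) * Re (F * cnj \<xi>))
      + p * (c\<^sup>2 * \<bar>c\<bar> powr (p - 2)) * ((cmod F)\<^sup>2 * cmod F powr (p - 2))"
    by (simp add: algebra_simps)
  also have "\<dots> = cmod \<xi> powr p + (p - 1) * \<bar>c\<bar> powr p * cmod F powr p
      + p * c * \<bar>c\<bar> powr (p - 2) * (cmod F powr (p - 2) * Re (F * cnj \<xi>))"
    using power2_mult_abs_powr[of "cmod F" p] by (simp add: power2_mult_abs_powr algebra_simps)
  finally show ?thesis .
qed

lemma continuous_on_smooth_fun: "smooth_fun f \<Longrightarrow> continuous_on UNIV f"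
  unfolding smooth_fun_def by (metis pderivs.simps(1))

lemma continuous_on_pdiff_smooth_fun: "smooth_fun f \<Longrightarrow> continuous_on UNIV (pdiff i f)"
  unfolding smooth_fun_def by (metis pderivs.simps)

lemma smooth_fun_has_pdiff:
  "smooth_fun f \<Longrightarrow> ((\<lambda>t. f (x + t *\<^sub>R axis i 1)) has_vector_derivative pdiff i f x) (at 0)"
  unfolding smooth_fun_def by (metis pderivs.simps)

lemma eventually_nhds_line:
  fixes x v :: "'a::real_normed_vector"
  assumes "\<forall>\<^sub>F z in nhds x. P z"
  shows "\<forall>\<^sub>F t in nhds 0. P (x + t *\<^sub>R v)"
proof -
  have "((\<lambda>t::real. x + t *\<^sub>R v) \<longlongrightarrow> x + 0 *\<^sub>R v) (nhds 0)"
    by (intro tendsto_intros filterlim_ident)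
  then have "((\<lambda>t. x + t *\<^sub>R v) \<longlongrightarrow> x) (nhds 0)"
    by simp
  then show ?thesis
    using assms by (simp add: filterlim_iff)
qed

lemma pdiff_eq_0_if_eventually_zero:
  assumes "\<forall>\<^sub>F z in nhds x. f z = 0"
  shows "pdiff i f x = 0"
proof -
  have "\<forall>\<^sub>F t in nhds 0. t \<in> UNIV \<longrightarrow> f (x + t *\<^sub>R axis i 1) = 0"
    using eventually_nhds_line[OF assms] by simp
  then have "((\<lambda>t. f (x + t *\<^sub>R axis i 1)) has_vector_derivative 0) (at 0)"
    using has_vector_derivative_cong_ev[where S=UNIV and g="\<lambda>_. 0"] eventually_nhds_x_imp_x by fastforce
  then show ?thesis
    unfolding pdiff_def by (rule vector_derivative_at)
qed

lemma normK_nonneg [simp]: "0 \<le> normK K x"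
  by (simp add: normK_def sum_nonneg)

lemma continuous_on_normK: "continuous_on A (normK K)"
  unfolding normK_def by (intro continuous_intros)

lemma normK_line_has_real_derivative:
  assumes "i \<in> K" and "0 < normK K x"
  shows "((\<lambda>s. normK K (x + s *\<^sub>R axis i 1)) has_real_derivative x $ i / normK K x) (at 0)"
proof -
  have "((\<lambda>s. \<Sum>j\<in>K. (x $ j + s * (if j = i then 1 else 0))\<^sup>2) has_real_derivative
          (\<Sum>j\<in>K. 2 * (x $ j + 0 * (if j = i then 1 else 0)) * (if j = i then 1 else 0))) (at 0)"
    by (rule derivative_eq_intros refl | simp add: mult_ac)+
  then have sq: "((\<lambda>s. \<Sum>j\<in>K. ((x + s *\<^sub>R axis i 1) $ j)\<^sup>2) has_real_derivative 2 * x $ i) (at 0)"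
    using assms(1) by (simp add: axis_def if_distrib cong: if_cong)
  have "((\<lambda>s. sqrt (\<Sum>j\<in>K. ((x + s *\<^sub>R axis i 1) $ j)\<^sup>2)) has_real_derivative
          inverse (sqrt (\<Sum>j\<in>K. (x $ j)\<^sup>2)) / 2 * (2 * x $ i)) (at 0)"
    using DERIV_chain2[OF DERIV_real_sqrt sq] assms(2) by (simp add: normK_def sum_nonneg)
  then show ?thesis
    by (simp add: normK_def field_simps sum_nonneg)
qed

lemma norm_radial_deriv_le: "cmod (radial_deriv K f x) \<le> normK K x * grad_norm f x"
proof -
  have "cmod (radial_deriv K f x) \<le> (\<Sum>i\<in>K. \<bar>x $ i\<bar> * cmod (pdiff i f x))"
    unfolding radial_deriv_def by (rule order_trans[OF norm_sum]) (simp add: norm_mult)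
  also have "\<dots> \<le> L2_set (\<lambda>i. x $ i) K * L2_set (\<lambda>i. cmod (pdiff i f x)) K"
    using L2_set_mult_ineq[of "\<lambda>i. x $ i" "\<lambda>i. cmod (pdiff i f x)" K] by simp
  also have "\<dots> \<le> normK K x * grad_norm f x"
    unfolding L2_set_def normK_def grad_norm_def
    by (intro mult_left_mono real_sqrt_le_mono sum_mono2) (auto simp: sum_nonneg)
  finally show ?thesis .
qed

lemma integrable_continuous_on_compact_support:
  fixes g :: "'a::euclidean_space \<Rightarrow> 'b::{banach, second_countable_topology}"
  assumes "compact S" "continuous_on S g" "\<And>x. x \<notin> S \<Longrightarrow> g x = 0"
  shows "integrable lborel g"
proof -
  have "(\<lambda>x. indicator S x *\<^sub>R g x) = g"
    using assms(3) by (auto simp: indicator_def)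
  then show ?thesis
    using borel_integrable_compact[OF assms(1,2)] by simp
qed

lemma
  fixes g :: "'a::euclidean_space \<Rightarrow> real"
  assumes "integrable lborel g"
  shows integrable_translate_lborel: "integrable lborel (\<lambda>x. g (x + c))"
    and integral_translate_lborel: "(\<integral>x. g (x + c) \<partial>lborel) = integral\<^sup>L lborel g"
proof -
  have m: "(+) c \<in> measurable lborel borel" and g_m: "g \<in> borel_measurable borel"
    using borel_measurable_integrable[OF assms] by simp_all
  show "integrable lborel (\<lambda>x. g (x + c))"
    using integrable_distr_eq[OF m g_m] assms by (simp add: lborel_distr_plus add.commute)
  show "(\<integral>x. g (x + c) \<partial>lborel) = integral\<^sup>L lborel g"
    using integral_distr[OF m g_m] by (simp add: lborel_distr_plus add.commute)
qed

lemma abs_diff_le_along_line: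
  fixes \<psi> D :: "'a::real_normed_vector \<Rightarrow> real"
  assumes deriv: "\<And>x. ((\<lambda>s. \<psi> (x + s *\<^sub>R v)) has_real_derivative D x) (at 0)"
    and bound: "\<And>x. \<bar>D x\<bar> \<le> B" and t: "0 < t"
  shows "\<bar>\<psi> (x + t *\<^sub>R v) - \<psi> x\<bar> \<le> B * t"
proof -
  have "((\<lambda>s. \<psi> (x + s *\<^sub>R v)) has_real_derivative D (x + s *\<^sub>R v)) (at s)" for s
  proof -
    have "(\<lambda>u. \<psi> ((x + s *\<^sub>R v) + u *\<^sub>R v)) = (\<lambda>u. \<psi> (x + (u + s) *\<^sub>R v))"
      by (simp add: algebra_simps)
    then show ?thesis
      using deriv[of "x + s *\<^sub>R v"] DERIV_shift[of "\<lambda>s. \<psi> (x + s *\<^sub>R v)" _ 0 s] by simp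
  qed
  then obtain z where "\<psi> (x + t *\<^sub>R v) - \<psi> (x + 0 *\<^sub>R v) = (t - 0) * D (x + z *\<^sub>R v)"
    using MVT2[OF t, of "\<lambda>s. \<psi> (x + s *\<^sub>R v)" "\<lambda>s. D (x + s *\<^sub>R v)"] by blast
  then show ?thesis
    using bound[of "x + z *\<^sub>R v"] t by (simp add: abs_mult mult.commute mult_left_mono)
qed

text \<open>A one-dimensional divergence theorem: difference quotients of \<open>\<psi>\<close> in direction \<open>v\<close>
  have integral zero by translation invariance, and converge to \<open>D\<close> dominated by a multiple
  of the indicator of a compact neighbourhood of the support.\<close>

lemma integral_directional_derivative_eq_0:
  fixes \<psi> D :: "'a::euclidean_space \<Rightarrow> real"
  assumes S: "compact S" and zero: "\<And>x. x \<notin> S \<Longrightarrow> \<psi> x = 0" and \<psi>: "integrable lborel \<psi>"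
    and deriv: "\<And>x. ((\<lambda>s. \<psi> (x + s *\<^sub>R v)) has_real_derivative D x) (at 0)"
    and bound: "\<And>x. \<bar>D x\<bar> \<le> B"
  shows "integrable lborel D \<and> integral\<^sup>L lborel D = 0"
proof -
  define h :: "nat \<Rightarrow> real" where "h n = 1 / Suc n" for n
  define q where "q n x = (\<psi> (x + h n *\<^sub>R v) - \<psi> x) / h n" for n x
  define T where "T = {x + z | x z. x \<in> S \<and> z \<in> cball 0 (norm v)}"
  have h: "0 < h n" "h n \<le> 1" for n
    by (auto simp: h_def)
  have q_int: "integrable lborel (q n)" for n
    unfolding q_def using integrable_translate_lborel[OF \<psi>] \<psi> by simp
  have q_integral: "integral\<^sup>L lborel (q n) = 0" for n
    unfolding q_def using integrable_translate_lborel[OF \<psi>] integral_translate_lborel[OF \<psi>] \<psi>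
    by simp
  have q_lim: "(\<lambda>n. q n x) \<longlonglongrightarrow> D x" for x
  proof -
    have "(\<lambda>t. (\<psi> (x + t *\<^sub>R v) - \<psi> x) / t) \<midarrow>0\<rightarrow> D x"
      using deriv[of x] by (simp add: DERIV_def)
    moreover have "h \<longlonglongrightarrow> 0"
      unfolding h_def using LIMSEQ_Suc[OF lim_const_over_n[of 1]] by simp
    moreover have "\<forall>n. h n \<noteq> 0"
      using h(1) by (metis less_irrefl)
    ultimately show ?thesis
      unfolding q_def by (simp add: LIMSEQ_SEQ_conv[symmetric])
  qed
  have q_bound: "norm (q n x) \<le> B * indicator T x" for n x
  proof (cases "x \<in> T")
    case True
    then show ?thesis
      using abs_diff_le_along_line[OF deriv bound h(1), of x] h(1)[of n]
      by (simp add: q_def divide_le_eq)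
  next
    case False
    have "x \<notin> S"
      using False unfolding T_def by fastforce
    moreover have "x + h n *\<^sub>R v \<notin> S"
    proof
      assume "x + h n *\<^sub>R v \<in> S"
      moreover have "norm (- (h n *\<^sub>R v)) \<le> norm v"
        using h[of n] by (simp add: mult_left_le_one_le)
      ultimately have "(x + h n *\<^sub>R v) + - (h n *\<^sub>R v) \<in> T"
        unfolding T_def mem_cball_0 by blast
      with False show False
        by simp
    qed
    ultimately show ?thesis
      using False zero by (simp add: q_def)
  qed
  have "compact T"
    unfolding T_def by (rule compact_sums[OF S compact_cball])
  then have dom: "integrable lborel (\<lambda>x. B * indicator T x)"
    by (intro integrable_mult_right integrable_real_indicator emeasure_compact_finite)
      (simp_all add: borel_compact)
  have q_meas: "q n \<in> borel_measurable lborel" for n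
    using q_int by (rule borel_measurable_integrable)
  have D_meas: "D \<in> borel_measurable lborel"
    using q_lim q_meas by (rule borel_measurable_LIMSEQ_real)
  note dominated = D_meas q_meas dom AE_I2[OF q_lim] AE_I2[OF q_bound]
  have "(\<lambda>n. integral\<^sup>L lborel (q n)) \<longlonglongrightarrow> integral\<^sup>L lborel D"
    by (rule integral_dominated_convergence[OF dominated])
  then have "integral\<^sup>L lborel D = 0"
    unfolding q_integral by (simp add: LIMSEQ_const_iff)
  then show ?thesis
    using integrable_dominated_convergence[OF dominated] by simp
qed

definition weighted :: "'n::finite set \<Rightarrow> real \<Rightarrow> (real^'n \<Rightarrow> complex) \<Rightarrow> real^'n \<Rightarrow> complex"
  where "weighted K b g x = g x / of_real (normK K x powr b)"

definition flux :: "'n::finite set \<Rightarrow> real \<Rightarrow> real \<Rightarrow> (real^'n \<Rightarrow> complex) \<Rightarrow> 'n \<Rightarrow> real^'n \<Rightarrow> real"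
  where "flux K p a f i x = x $ i * normK K x powr (- a) * cmod (f x) powr p"

definition flux_deriv ::
    "'n::finite set \<Rightarrow> real \<Rightarrow> real \<Rightarrow> (real^'n \<Rightarrow> complex) \<Rightarrow> 'n \<Rightarrow> real^'n \<Rightarrow> real"
  where "flux_deriv K p a f i x = normK K x powr (- a) * cmod (f x) powr p
     - a * (x $ i)\<^sup>2 * normK K x powr (- a - 2) * cmod (f x) powr p
     + p * x $ i * normK K x powr (- a) * cmod (f x) powr (p - 2) * Re (cnj (f x) * pdiff i f x)"

lemma sum_flux_deriv:
  assumes p: "0 < p"
  shows "(\<Sum>i\<in>K. flux_deriv K p \<alpha> f i x)
           = (real (card K) - \<alpha>) * cmod (weighted K (\<alpha> / p) f x) powr p
             + p * (cmod (weighted K (\<alpha> / p) f x) powr (p - 2)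
                    * Re (weighted K (\<alpha> / p) f x * cnj (weighted K (\<alpha> / p) (radial_deriv K f) x)))"
proof (cases "normK K x = 0")
  case True
  then show ?thesis
    by (simp add: flux_deriv_def weighted_def)
next
  case False
  define r where "r = normK K x"
  have r: "0 < r"
    using False normK_nonneg[of K x] unfolding r_def by linarith
  define a where "a = r powr (\<alpha> / p)"
  have a: "0 < a" and a_powr: "a powr p = r powr \<alpha>"
    using r p by (simp_all add: a_def powr_powr)
  have a_powr2: "a powr (p - 2) * a\<^sup>2 = r powr \<alpha>"
    using a a_powr powr_add[of a "p - 2" 2] by (simp add: powr_numeral)
  have r_sq: "(\<Sum>i\<in>K. (x $ i)\<^sup>2) = r\<^sup>2"
    unfolding r_def normK_def by (simp add: sum_nonneg)
  have Re_radial: "Re (cnj (f x) * radial_deriv K f x) = (\<Sum>i\<in>K. x $ i * Re (cnj (f x) * pdiff i f x))"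
    unfolding radial_deriv_def by (simp add: sum_distrib_left Re_sum algebra_simps)
  have F_powr: "cmod (weighted K (\<alpha> / p) f x) powr p = r powr (- \<alpha>) * cmod (f x) powr p"
    using a r by (simp add: weighted_def norm_divide powr_divide a_powr powr_minus
        flip: a_def r_def divide_inverse_commute)
  have cross: "cmod (weighted K (\<alpha> / p) f x) powr (p - 2)
                 * Re (weighted K (\<alpha> / p) f x * cnj (weighted K (\<alpha> / p) (radial_deriv K f) x))
               = r powr (- \<alpha>) * cmod (f x) powr (p - 2) * Re (cnj (f x) * radial_deriv K f x)"
  proof -
    have "weighted K (\<alpha> / p) f x * cnj (weighted K (\<alpha> / p) (radial_deriv K f) x)
            = cnj (cnj (f x) * radial_deriv K f x) / of_real (a\<^sup>2)"
      using a by (simp add: weighted_def power2_eq_square flip: a_def r_def)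
    then show ?thesis
      using a r a_powr2
      by (simp add: weighted_def norm_divide powr_divide Re_divide_of_real powr_minus field_simps
          power2_eq_square flip: a_def r_def)
  qed
  have r_powr: "r powr (- \<alpha> - 2) * r\<^sup>2 = r powr (- \<alpha>)"
    using r powr_add[of r "- \<alpha> - 2" 2] by simp
  have "(\<Sum>i\<in>K. flux_deriv K p \<alpha> f i x)
      = real (card K) * r powr (- \<alpha>) * cmod (f x) powr p
        - \<alpha> * (\<Sum>i\<in>K. (x $ i)\<^sup>2) * r powr (- \<alpha> - 2) * cmod (f x) powr p
        + p * (\<Sum>i\<in>K. x $ i * Re (cnj (f x) * pdiff i f x)) * r powr (- \<alpha>) * cmod (f x) powr (p - 2)"
    unfolding flux_deriv_def r_def[symmetric]
    by (simp add: sum.distrib sum_subtractf sum_distrib_left sum_distrib_right algebra_simps)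
  also have "\<dots> = (real (card K) - \<alpha>) * (r powr (- \<alpha>) * cmod (f x) powr p)
        + p * (r powr (- \<alpha>) * cmod (f x) powr (p - 2) * Re (cnj (f x) * radial_deriv K f x))"
    unfolding r_sq Re_radial[symmetric] using r_powr by (simp add: algebra_simps)
  finally show ?thesis
    unfolding F_powr cross .
qed

lemma norm_weighted_radial_deriv_le:
  "cmod (weighted K b (radial_deriv K f) x) \<le> grad_norm f x / normK K x powr (b - 1)"
proof (cases "normK K x = 0")
  case False
  then have r: "0 < normK K x"
    using normK_nonneg[of K x] by linarith
  have "cmod (weighted K b (radial_deriv K f) x) \<le> normK K x * grad_norm f x / normK K x powr b"
    unfolding weighted_def using norm_radial_deriv_le[of K f x] r
    by (simp add: norm_divide divide_right_mono)
  also have "\<dots> = grad_norm f x / normK K x powr (b - 1)"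
    using r by (simp add: powr_diff field_simps)
  finally show ?thesis .
qed (simp add: weighted_def)

lemma continuous_on_norm_powr:
  fixes g :: "'a::topological_space \<Rightarrow> 'b::real_normed_vector"
  assumes "continuous_on A g" and "0 < q"
  shows "continuous_on A (\<lambda>x. norm (g x) powr q)"
  using assms by (intro continuous_on_powr' continuous_intros) auto

locale support_off_subspace =
  fixes K :: "'n::finite set" and f :: "real^'n \<Rightarrow> complex" and S :: "(real^'n) set"
  assumes smooth: "smooth_fun f"
    and compact_support: "compact S"
    and support_off: "S \<inter> {x. normK K x = 0} = {}"
    and vanishes_outside: "\<And>x. x \<notin> S \<Longrightarrow> f x = 0"
begin

lemma normK_pos:
  assumes "x \<in> S"
  shows "0 < normK K x"
proof -
  have "normK K x \<noteq> 0"
    using support_off assms by blast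
  then show ?thesis
    using normK_nonneg[of K x] by linarith
qed

lemma eventually_vanishes: "x \<notin> S \<Longrightarrow> \<forall>\<^sub>F z in nhds x. f z = 0"
  using eventually_nhds_in_open[of "- S" x] compact_support vanishes_outside
  by (auto simp: compact_imp_closed open_Compl elim: eventually_mono)

lemma pdiff_outside: "x \<notin> S \<Longrightarrow> pdiff i f x = 0"
  by (rule pdiff_eq_0_if_eventually_zero[OF eventually_vanishes])

lemma continuous_on_f: "continuous_on S f"
  using continuous_on_smooth_fun[OF smooth] continuous_on_subset by blast

lemma continuous_on_pdiff: "continuous_on S (pdiff i f)"
  using continuous_on_pdiff_smooth_fun[OF smooth] continuous_on_subset by blast

lemma continuous_on_weighted:
  assumes "continuous_on S g"
  shows "continuous_on S (weighted K b g)"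
  unfolding weighted_def using assms
  by (intro continuous_intros continuous_on_normK) (auto dest!: normK_pos)

lemma continuous_on_normK_powr: "continuous_on S (\<lambda>x. normK K x powr b)"
  by (intro continuous_intros continuous_on_normK) (auto dest!: normK_pos)

lemma continuous_on_radial_deriv: "continuous_on S (radial_deriv K f)"
  unfolding radial_deriv_def by (intro continuous_intros continuous_on_pdiff)

lemma continuous_on_grad_norm: "continuous_on S (grad_norm f)"
  unfolding grad_norm_def by (intro continuous_intros continuous_on_pdiff)

lemma flux_has_derivative:
  assumes p: "1 < p" and i: "i \<in> K"
  shows "((\<lambda>s. flux K p a f i (x + s *\<^sub>R axis i 1)) has_real_derivative flux_deriv K p a f i x) (at 0)"
proof (cases "x \<in> S")
  case True
  have r: "0 < normK K x"
    using normK_pos[OF True] .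
  have d_coord: "((\<lambda>s. (x + s *\<^sub>R axis i 1) $ i) has_real_derivative 1) (at 0)"
    by (auto intro!: derivative_eq_intros)
  have d_weight: "((\<lambda>s. normK K (x + s *\<^sub>R axis i 1) powr (- a)) has_real_derivative
       - a * normK K x powr (- a - 1) * (x $ i / normK K x)) (at 0)"
    using DERIV_fun_powr[OF normK_line_has_real_derivative[OF i r], of "- a"] r by simp
  have d_f: "((\<lambda>s. cmod (f (x + s *\<^sub>R axis i 1)) powr p) has_real_derivative
       p * cmod (f x) powr (p - 2) * Re (cnj (f x) * pdiff i f x)) (at 0)"
    using cmod_powr_has_real_derivative[OF smooth_fun_has_pdiff[OF smooth] p] by simp
  have powr_eq: "normK K x powr (- a - 1) = normK K x powr (- a - 2) * normK K x"
    using powr_add[of "normK K x" "- a - 2" 1] r by (simp add: mult.commute minus_diff_commute)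
  show ?thesis
    unfolding flux_def
    by (rule DERIV_cong[OF DERIV_mult[OF DERIV_mult[OF d_coord d_weight] d_f]])
      (use r in \<open>simp add: flux_deriv_def powr_eq power2_eq_square field_simps\<close>)
next
  case False
  have "\<forall>\<^sub>F s in nhds 0. flux K p a f i (x + s *\<^sub>R axis i 1) = 0"
    using eventually_nhds_line[OF eventually_vanishes[OF False], of "axis i 1"] p
    by (simp add: flux_def eventually_mono)
  moreover have "flux_deriv K p a f i x = 0"
    using vanishes_outside[OF False] by (simp add: flux_deriv_def)
  ultimately show ?thesis
    by (simp add: DERIV_cong_ev[OF refl _ refl, of _ "\<lambda>_. 0"])
qed

lemma flux_deriv_bounded:
  assumes p: "1 < p"
  obtains B where "\<And>x. \<bar>flux_deriv K p a f i x\<bar> \<le> B"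
proof -
  define M where "M x = normK K x powr (- a) * cmod (f x) powr p
    + \<bar>a\<bar> * (x $ i)\<^sup>2 * normK K x powr (- a - 2) * cmod (f x) powr p
    + p * \<bar>x $ i\<bar> * normK K x powr (- a) * (cmod (f x) powr (p - 1) * cmod (pdiff i f x))" for x
  have "continuous_on S (\<lambda>x. cmod (f x) powr q)" if "0 < q" for q
    using continuous_on_norm_powr[OF continuous_on_f that] .
  then have "continuous_on S M"
    unfolding M_def using p
    by (intro continuous_on_add continuous_on_mult continuous_on_const continuous_on_power
        continuous_on_rabs continuous_on_component continuous_on_id continuous_on_normK_powr
        continuous_on_norm continuous_on_pdiff) auto
  then obtain B where B: "\<And>x. x \<in> S \<Longrightarrow> \<bar>M x\<bar> \<le> B"
    using compact_imp_bounded[OF compact_continuous_image[OF _ compact_support]]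
    by (force simp: bounded_iff)
  have "\<bar>flux_deriv K p a f i x\<bar> \<le> M x" for x
  proof -
    have "\<bar>p * x $ i * normK K x powr (- a) * cmod (f x) powr (p - 2) * Re (cnj (f x) * pdiff i f x)\<bar>
        \<le> p * \<bar>x $ i\<bar> * normK K x powr (- a) * (cmod (f x) powr (p - 1) * cmod (pdiff i f x))"
      using abs_cmod_powr_mult_Re_le[of "f x" p "pdiff i f x"] p
      by (simp add: abs_mult mult.assoc mult_left_mono)
    moreover have "\<bar>a * (x $ i)\<^sup>2 * normK K x powr (- a - 2) * cmod (f x) powr p\<bar>
        = \<bar>a\<bar> * (x $ i)\<^sup>2 * normK K x powr (- a - 2) * cmod (f x) powr p"
      by (simp add: abs_mult)
    moreover have "0 \<le> normK K x powr (- a) * cmod (f x) powr p"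
      by simp
    ultimately show ?thesis
      unfolding flux_deriv_def M_def by linarith
  qed
  then have "\<bar>flux_deriv K p a f i x\<bar> \<le> max B 0" for x
  proof (cases "x \<in> S")
    case True
    then show ?thesis
      using B[of x] \<open>\<bar>flux_deriv K p a f i x\<bar> \<le> M x\<close> by linarith
  next
    case False
    then show ?thesis
      using vanishes_outside[OF False] by (simp add: flux_deriv_def)
  qed
  then show ?thesis
    by (rule that)
qed

lemma integral_flux_deriv_eq_0:
  assumes p: "1 < p" and i: "i \<in> K"
  shows "integrable lborel (flux_deriv K p a f i) \<and> integral\<^sup>L lborel (flux_deriv K p a f i) = 0"
proof -
  have zero: "flux K p a f i x = 0" if "x \<notin> S" for x
    using vanishes_outside[OF that] p by (simp add: flux_def)
  have "continuous_on S (flux K p a f i)"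
    unfolding flux_def using p
    by (intro continuous_intros continuous_on_normK_powr continuous_on_norm_powr continuous_on_f) auto
  then have int: "integrable lborel (flux K p a f i)"
    using zero by (rule integrable_continuous_on_compact_support[OF compact_support])
  obtain B where B: "\<And>x. \<bar>flux_deriv K p a f i x\<bar> \<le> B"
    using flux_deriv_bounded[OF p, where a=a and i=i] by blast
  show ?thesis
    by (rule integral_directional_derivative_eq_0[OF compact_support zero int
          flux_has_derivative[OF p i] B])
qed

lemma integrable_norm_weighted_powr:
  assumes "0 < p" and "continuous_on S g" and "\<And>x. x \<notin> S \<Longrightarrow> g x = 0"
  shows "integrable lborel (\<lambda>x. cmod (weighted K b g x) powr p)"
  using assms
  by (intro integrable_continuous_on_compact_support[OF compact_support]
      continuous_on_norm_powr continuous_on_weighted) (auto simp: weighted_def)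

lemma integrable_grad_norm_powr:
  assumes "0 < p"
  shows "integrable lborel (\<lambda>x. (grad_norm f x / normK K x powr b) powr p)"
proof (rule integrable_continuous_on_compact_support[OF compact_support])
  have "continuous_on S (\<lambda>x. norm (grad_norm f x / normK K x powr b) powr p)"
    using assms
    by (intro continuous_on_norm_powr continuous_on_divide continuous_on_grad_norm
        continuous_on_normK_powr) (auto dest!: normK_pos)
  then show "continuous_on S (\<lambda>x. (grad_norm f x / normK K x powr b) powr p)"
    by (simp add: grad_norm_def sum_nonneg)
  show "(grad_norm f x / normK K x powr b) powr p = 0" if "x \<notin> S" for x
    using pdiff_outside[OF that] by (simp add: grad_norm_def)
qed

lemma integral_cross_term:
  fixes \<alpha> :: real
  assumes p: "1 < p"
  defines "F \<equiv> weighted K (\<alpha> / p) f" and "\<xi> \<equiv> weighted K (\<alpha> / p) (radial_deriv K f)"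
  shows "integrable lborel (\<lambda>x. cmod (F x) powr (p - 2) * Re (F x * cnj (\<xi> x)))"
    and "(\<integral>x. cmod (F x) powr (p - 2) * Re (F x * cnj (\<xi> x)) \<partial>lborel)
           = - ((real (card K) - \<alpha>) / p) * (\<integral>x. cmod (F x) powr p \<partial>lborel)"
proof -
  define \<Phi> where "\<Phi> x = (\<Sum>i\<in>K. flux_deriv K p \<alpha> f i x)" for x
  have \<Phi>: "integrable lborel \<Phi>" "integral\<^sup>L lborel \<Phi> = 0"
    using integral_flux_deriv_eq_0[OF p] unfolding \<Phi>_def by auto
  have F: "integrable lborel (\<lambda>x. cmod (F x) powr p)"
    unfolding F_def using p vanishes_outside
    by (intro integrable_norm_weighted_powr continuous_on_f) auto
  have cross_eq: "cmod (F x) powr (p - 2) * Re (F x * cnj (\<xi> x))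
                    = (\<Phi> x - (real (card K) - \<alpha>) * cmod (F x) powr p) / p" for x
    using sum_flux_deriv[of p K \<alpha> f x] p unfolding \<Phi>_def F_def \<xi>_def by (simp add: field_simps)
  show "integrable lborel (\<lambda>x. cmod (F x) powr (p - 2) * Re (F x * cnj (\<xi> x)))"
    unfolding cross_eq using \<Phi> F by simp
  show "(\<integral>x. cmod (F x) powr (p - 2) * Re (F x * cnj (\<xi> x)) \<partial>lborel)
           = - ((real (card K) - \<alpha>) / p) * (\<integral>x. cmod (F x) powr p \<partial>lborel)"
    unfolding cross_eq using \<Phi> F p by (simp add: diff_divide_distrib algebra_simps)
qed

lemma integral_Cp_eq:
  fixes \<alpha> :: real
  assumes p: "1 < p"
  defines "F \<equiv> weighted K (\<alpha> / p) f" and "\<xi> \<equiv> weighted K (\<alpha> / p) (radial_deriv K f)"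
    and "c \<equiv> (real (card K) - \<alpha>) / p"
  shows "(\<integral>x. Cp p (\<xi> x) (\<xi> x + of_real c * F x) \<partial>lborel)
           = (\<integral>x. cmod (\<xi> x) powr p \<partial>lborel) - \<bar>c\<bar> powr p * (\<integral>x. cmod (F x) powr p \<partial>lborel)"
proof -
  note cross = integral_cross_term[OF p, of \<alpha>, folded F_def \<xi>_def c_def]
  have F: "integrable lborel (\<lambda>x. cmod (F x) powr p)"
    unfolding F_def using p vanishes_outside
    by (intro integrable_norm_weighted_powr continuous_on_f) auto
  have \<xi>: "integrable lborel (\<lambda>x. cmod (\<xi> x) powr p)"
    unfolding \<xi>_def using p pdiff_outside
    by (intro integrable_norm_weighted_powr continuous_on_radial_deriv) (auto simp: radial_deriv_def)
  have "(\<integral>x. Cp p (\<xi> x) (\<xi> x + of_real c * F x) \<partial>lborel)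
      = (\<integral>x. cmod (\<xi> x) powr p \<partial>lborel) + (p - 1) * \<bar>c\<bar> powr p * (\<integral>x. cmod (F x) powr p \<partial>lborel)
        + p * c * \<bar>c\<bar> powr (p - 2) * (\<integral>x. cmod (F x) powr (p - 2) * Re (F x * cnj (\<xi> x)) \<partial>lborel)"
    unfolding Cp_add_scaled[OF p] using F \<xi> cross(1) by simp
  also have "\<dots> = (\<integral>x. cmod (\<xi> x) powr p \<partial>lborel)
      + (p - 1) * \<bar>c\<bar> powr p * (\<integral>x. cmod (F x) powr p \<partial>lborel)
      - p * (c\<^sup>2 * \<bar>c\<bar> powr (p - 2)) * (\<integral>x. cmod (F x) powr p \<partial>lborel)"
    unfolding cross(2) by (simp add: power2_eq_square)
  finally show ?thesis
    unfolding power2_mult_abs_powr by (simp add: algebra_simps)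
qed

end

theorem mainTheorem2:
  fixes K :: "'n::finite set" and p \<alpha> :: real and f :: "real^'n \<Rightarrow> complex"
  assumes "K \<noteq> {}"
    and "1 < p"
    and "smooth_fun f"
    and "\<exists>S. compact S \<and> S \<inter> {x. normK K x = 0} = {} \<and> (\<forall>x. x \<notin> S \<longrightarrow> f x = 0)"
  shows "\<bar>(real (card K) - \<alpha>) / p\<bar> powr p *
           (\<integral>x. cmod (f x / of_real (normK K x powr (\<alpha> / p))) powr p \<partial>lborel)
         \<le> (\<integral>x. (grad_norm f x / normK K x powr (\<alpha> / p - 1)) powr p \<partial>lborel)
           - (\<integral>x. Cp p (radial_deriv K f x / of_real (normK K x powr (\<alpha> / p)))
                   (radial_deriv K f x / of_real (normK K x powr (\<alpha> / p))
                    + of_real ((real (card K) - \<alpha>) / p) * (f x / of_real (normK K x powr (\<alpha> / p))))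
               \<partial>lborel)"
proof -
  obtain S where "compact S" "S \<inter> {x. normK K x = 0} = {}" "\<forall>x. x \<notin> S \<longrightarrow> f x = 0"
    using assms(4) by blast
  then interpret support_off_subspace K f S
    using assms(3) by unfold_locales auto
  have "(\<integral>x. cmod (weighted K (\<alpha> / p) (radial_deriv K f) x) powr p \<partial>lborel)
      \<le> (\<integral>x. (grad_norm f x / normK K x powr (\<alpha> / p - 1)) powr p \<partial>lborel)"
    using assms(2) pdiff_outside
    by (intro integral_mono integrable_norm_weighted_powr continuous_on_radial_deriv
        integrable_grad_norm_powr powr_mono2 norm_weighted_radial_deriv_le)
      (auto simp: radial_deriv_def)
  with integral_Cp_eq[OF assms(2), of \<alpha>] show ?thesis
    unfolding weighted_def by linarith
qed

end
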